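(* Let $d=1$, the walk be nearest-neighbor, and assume $\int|\log\pi(0,\pm1)|^{1+\alpha}\,\mathrm{d}\mathbb{P}<\infty$ for some $\alpha>0$. Then there exist $\xi_c,\xi_c'\in\mathbb{R}$ with $-1<\xi_c'\le0\le\xi_c<1$ such that for every $\xi\in(-1,\xi_c')\cup(\xi_c,1)$ there exists $\mu_\xi\in A_\xi\cap M_{1,s}^{\ll}(\Omega\times U)$ with $\mathrm{d}\mu_\xi(\omega,z)=\mathrm{d}(\mu_\xi)^1(\omega)\,\pi(0,z)\,\mathrm{e}^{\theta z+F(\omega,z)+r}$ for some $\theta\in\mathbb{R}$, $F\in\mathcal{K}$ and $r\in\mathbb{R}$.
   Context: Setting: $d=1$, $U=\{-1,1\}$. An environment is $\omega=(\omega_x)_{x\in\mathbb{Z}}$ with $\omega_x=(\pi(x,x+1),\pi(x,x-1))$ a probability vector; $\Omega$ is the space of environments (product topology, Borel $\sigma$-algebra), $(T_z\omega)_x=\omega_{x+z}$, and $\mathbb{P}$ is a probability measure on $\Omega$ stationary and ergodic under the shifts. For $\mu\in M_1(\Omega\times U)$, $\mathrm{d}(\mu)^1(\omega):=\sum_{z\in U}\mathrm{d}\mu(\omega,z)$, $\mathrm{d}(\mu)^2(\omega):=\sum_{z\in U}\mathrm{d}\mu(T_{-z}\omega,z)$; $M_{1,s}^{\ll}(\Omega\times U)$ is the set of $\mu$ with $(\mu)^1=(\mu)^2\ll\mathbb{P}$ and $\frac{\mathrm{d}\mu(\cdot,z)}{\mathrm{d}(\mu)^1}>0$ $\mathbb{P}$-a.s.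 for $z=\pm1$. $A_\xi:=\{\mu\in M_1(\Omega\times U):\int\sum_{z}z\,\mathrm{d}\mu(\omega,z)=\xi\}$. The class $\mathcal{K}$ consists of measurable $F:\Omega\times U\to\mathbb{R}$ with $F(\cdot,z)\in L^{1+\alpha}(\mathbb{P})$ for some $\alpha>0$, $\mathbb{E}[F(\cdot,z)]=0$ for each $z$, and, for $\mathbb{P}$-a.e. $\omega$ and every sequence $(x_k)_{k=0}^n$ in $\mathbb{Z}$ with $x_0=x_n$ and $x_{k+1}-x_k\in U$, $\sum_{k=0}^{n-1}F(T_{x_k}\omega,x_{k+1}-x_k)=0$. *)

theory Defs
  imports "HOL-Probability.Probability"
begin

text \<open>Environments in dimension d = 1: omega x = (pi(x,x+1), pi(x,x-1)).\<close>
type_synonym env = "int \<Rightarrow> real \<times> real"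

definition U :: "int set" where "U = {-1, 1}"

definition is_env :: "env \<Rightarrow> bool" where
  "is_env \<omega> \<longleftrightarrow> (\<forall>x. fst (\<omega> x) \<ge> 0 \<and> snd (\<omega> x) \<ge> 0 \<and> fst (\<omega> x) + snd (\<omega> x) = 1)"

definition Omega :: "env measure" where
  "Omega = restrict_space (PiM UNIV (\<lambda>_. borel)) {\<omega>. is_env \<omega>}"

definition shift :: "int \<Rightarrow> env \<Rightarrow> env" where
  "shift z \<omega> = (\<lambda>x. \<omega> (x + z))"

definition pi0 :: "env \<Rightarrow> int \<Rightarrow> real" where
  "pi0 \<omega> z = (if z = 1 then fst (\<omega> 0) else snd (\<omega> 0))"

definition stationary_ergodic :: "env measure \<Rightarrow> bool" where
  "stationary_ergodic P \<longleftrightarrow>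
     prob_space P \<and> sets P = sets Omega \<and>
     (\<forall>z. distr P P (shift z) = P) \<and>
     (\<forall>A \<in> sets P. (\<forall>z. shift z -` A \<inter> space P = A) \<longrightarrow>
        measure P A = 0 \<or> measure P A = 1)"

definition OmegaU :: "(env \<times> int) measure" where
  "OmegaU = Omega \<Otimes>\<^sub>M count_space U"

definition M1 :: "(env \<times> int) measure set" where
  "M1 = {\<mu>. prob_space \<mu> \<and> sets \<mu> = sets OmegaU}"

definition marg1 :: "(env \<times> int) measure \<Rightarrow> env measure" where
  "marg1 \<mu> = distr \<mu> Omega fst"

definition marg2 :: "(env \<times> int) measure \<Rightarrow> env measure" where
  "marg2 \<mu> = distr \<mu> Omega (\<lambda>(\<eta>, z). shift z \<eta>)"

text \<open>M_{1,s}^{<<}(Omega x U) relative to P.  The density condition is read as: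
  there is a version g(.,z) of d mu(.,z) / d (mu)^1 which is positive P-a.s.\<close>
definition M1s_ac :: "env measure \<Rightarrow> (env \<times> int) measure set" where
  "M1s_ac P = {\<mu>. \<mu> \<in> M1 \<and> marg1 \<mu> = marg2 \<mu> \<and> absolutely_continuous P (marg1 \<mu>) \<and>
      (\<exists>g :: int \<Rightarrow> env \<Rightarrow> real. \<forall>z \<in> U.
          g z \<in> borel_measurable Omega \<and> (AE \<omega> in P. g z \<omega> > 0) \<and>
          (\<forall>A \<in> sets Omega. emeasure \<mu> (A \<times> {z}) =
                 (\<integral>\<^sup>+ \<omega>. ennreal (g z \<omega>) * indicator A \<omega> \<partial>(marg1 \<mu>))))}"

definition A_xi :: "real \<Rightarrow> (env \<times> int) measure set" where
  "A_xi \<xi> = {\<mu>. \<mu> \<in> M1 \<and> (\<integral>p. real_of_int (snd p) \<partial>\<mu>) = \<xi>}"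

definition classK :: "env measure \<Rightarrow> (env \<Rightarrow> int \<Rightarrow> real) set" where
  "classK P = {F. (\<forall>z \<in> U. (\<lambda>\<omega>. F \<omega> z) \<in> borel_measurable Omega) \<and>
      (\<exists>\<alpha> > 0. \<forall>z \<in> U. integrable P (\<lambda>\<omega>. \<bar>F \<omega> z\<bar> powr (1 + \<alpha>))) \<and>
      (\<forall>z \<in> U. (\<integral>\<omega>. F \<omega> z \<partial>P) = 0) \<and>
      (AE \<omega> in P. \<forall>(n::nat) (xs :: nat \<Rightarrow> int). xs 0 = xs n \<and> (\<forall>k < n. xs (Suc k) - xs k \<in> U)
          \<longrightarrow> (\<Sum>k<n. F (shift (xs k) \<omega>) (xs (Suc k) - xs k)) = 0)}"

end

theory Submission
  imports Defs
begin

text \<open>Fix a direction \<open>e = \<plusminus>1\<close> and a strength \<open>0 < c \<le> 1/8\<close>. Let the probability \<open>q(\<omega>)\<close> of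
  stepping in direction \<open>e\<close> solve \<open>q(\<omega>) = 1 - c \<pi>(-e,0) \<pi>(0,-e) / q(T_{-e} \<omega>)\<close>; this is a
  contraction with a fixed point in \<open>[3/4, 1]\<close>. Across every bond the tilted transition
  probabilities then multiply to \<open>c\<close> times the original ones, so \<open>log (q(\<omega>,z) / \<pi>(0,z))\<close> is a
  gradient in the class K plus \<open>\<theta> z + r\<close>. The weight \<open>h = (\<Sum>_k \<Prod>_{j \<le> k} \<sigma>(T_e^j \<omega>)) / q\<close>
  with \<open>\<sigma> = (1 - q) / q\<close> has constant flux \<open>h q - (h \<circ> T_e) (1 - q \<circ> T_e) = 1\<close>; by stationarity
  \<open>h / E h\<close> is therefore an invariant density and the speed is \<open>e / E h\<close>. Since \<open>E h\<close> is
  continuous in \<open>c\<close>, equals 1 at \<open>c = 0\<close> and exceeds 1 at \<open>c = 1/8\<close> (as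
  \<open>h \<ge> 1 + c \<pi>(-e,0) \<pi>(0,-e)\<close>), the intermediate value theorem yields every speed of modulus
  in \<open>(1 / E h|_{c=1/8}, 1)\<close> in both directions.\<close>

section \<open>A Riccati-type fixed point\<close>

fun riccati_approx :: "('a \<Rightarrow> 'a) \<Rightarrow> ('a \<Rightarrow> real) \<Rightarrow> nat \<Rightarrow> 'a \<Rightarrow> real" where
  "riccati_approx T a 0 x = 1"
| "riccati_approx T a (Suc n) x = 1 - a x / riccati_approx T a n (T x)"

definition riccati :: "('a \<Rightarrow> 'a) \<Rightarrow> ('a \<Rightarrow> real) \<Rightarrow> 'a \<Rightarrow> real" where
  "riccati T a x = lim (\<lambda>n. riccati_approx T a n x)"

lemma measurable_riccati_approx [measurable]:
  assumes [measurable]: "T \<in> M \<rightarrow>\<^sub>M M" "a \<in> borel_measurable M"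
  shows "riccati_approx T a n \<in> borel_measurable M"
proof (induction n)
  case (Suc n)
  have [measurable]: "(\<lambda>x. riccati_approx T a n (T x)) \<in> borel_measurable M"
    using measurable_comp[OF assms(1) Suc] by (simp add: comp_def)
  show ?case by (simp only: riccati_approx.simps) measurable
qed simp

lemma measurable_riccati [measurable]:
  assumes [measurable]: "T \<in> M \<rightarrow>\<^sub>M M" "a \<in> borel_measurable M"
  shows "riccati T a \<in> borel_measurable M"
  unfolding riccati_def by measurable

context
  fixes T :: "'a \<Rightarrow> 'a" and a :: "'a \<Rightarrow> real"
  assumes a_nonneg: "\<And>x. 0 \<le> a x" and a_le: "\<And>x. a x \<le> 1/8"
begin

lemma riccati_approx_bounds: "3/4 \<le> riccati_approx T a n x \<and> riccati_approx T a n x \<le> 1"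
proof (induction n arbitrary: x)
  case (Suc n)
  have "a x / riccati_approx T a n (T x) \<le> (1/8) / (3/4)"
    using Suc[of "T x"] a_nonneg a_le by (intro frac_le) auto
  moreover have "0 \<le> a x / riccati_approx T a n (T x)"
    using Suc[of "T x"] a_nonneg by simp
  ultimately show ?case by simp
qed simp

lemma riccati_approx_Suc_le: "riccati_approx T a (Suc n) x \<le> riccati_approx T a n x"
proof (induction n arbitrary: x)
  case 0
  show ?case using a_nonneg by simp
next
  case (Suc n)
  have "0 < riccati_approx T a n (T x) * riccati_approx T a (Suc n) (T x)"
    using riccati_approx_bounds[of n "T x"] riccati_approx_bounds[of "Suc n" "T x"]
    by (intro mult_pos_pos) linarith+
  then have "a x / riccati_approx T a n (T x) \<le> a x / riccati_approx T a (Suc n) (T x)"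
    by (rule divide_left_mono[OF Suc a_nonneg])
  then show ?case by (simp only: riccati_approx.simps)
qed

lemma riccati_approx_tendsto: "(\<lambda>n. riccati_approx T a n x) \<longlonglongrightarrow> riccati T a x"
proof -
  have "decseq (\<lambda>n. riccati_approx T a n x)"
    using riccati_approx_Suc_le by (intro decseq_SucI)
  then obtain L where "(\<lambda>n. riccati_approx T a n x) \<longlonglongrightarrow> L"
    using riccati_approx_bounds by (metis decseq_convergent)
  then show ?thesis unfolding riccati_def by (simp add: limI)
qed

lemma riccati_bounds: "3/4 \<le> riccati T a x" "riccati T a x \<le> 1"
  by (rule LIMSEQ_le_const[OF riccati_approx_tendsto], use riccati_approx_bounds in blast)
     (rule LIMSEQ_le_const2[OF riccati_approx_tendsto], use riccati_approx_bounds in blast)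

lemma riccati_fixpoint: "riccati T a x = 1 - a x / riccati T a (T x)"
proof (rule LIMSEQ_unique)
  show "(\<lambda>n. riccati_approx T a (Suc n) x) \<longlonglongrightarrow> riccati T a x"
    using riccati_approx_tendsto by (rule LIMSEQ_Suc)
  show "(\<lambda>n. riccati_approx T a (Suc n) x) \<longlonglongrightarrow> 1 - a x / riccati T a (T x)"
    unfolding riccati_approx.simps using riccati_bounds(1)[of "T x"]
    by (intro tendsto_intros riccati_approx_tendsto) auto
qed

text \<open>The fixed point equation is a contraction with factor \<open>(1/8) / (3/4)\<^sup>2 < 1/2\<close>.\<close>

lemma riccati_approx_error:
  "0 \<le> riccati_approx T a n x - riccati T a x \<and> riccati_approx T a n x - riccati T a x \<le> (1/2)^n"
proof (induction n arbitrary: x)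
  case 0
  then show ?case using riccati_bounds[of x] by simp
next
  case (Suc n)
  define u where "u = riccati_approx T a n (T x)"
  define v where "v = riccati T a (T x)"
  have uv: "3/4 \<le> u" "3/4 \<le> v" "0 \<le> u - v" "u - v \<le> (1/2)^n"
    using riccati_approx_bounds riccati_bounds Suc[of "T x"] by (auto simp: u_def v_def)
  have eq: "riccati_approx T a (Suc n) x - riccati T a x = a x * (u - v) / (u * v)"
    using uv by (subst riccati_fixpoint) (simp add: u_def v_def field_simps)
  have "(3/4) * (3/4) \<le> u * v" using uv by (intro mult_mono) auto
  then have "a x * (u - v) / (u * v) \<le> (1/8) * (u - v) / (9/16)"
    using uv a_nonneg a_le by (intro frac_le mult_right_mono) auto
  also have "\<dots> \<le> (1/2)^(Suc n)" using uv by simp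
  finally show ?case using eq uv a_nonneg by simp
qed

end

lemma continuous_on_riccati:
  assumes cont: "\<And>x. continuous_on C (\<lambda>c. a c x)"
    and nonneg: "\<And>c x. c \<in> C \<Longrightarrow> 0 \<le> a c x" and le: "\<And>c x. c \<in> C \<Longrightarrow> a c x \<le> 1/8"
  shows "continuous_on C (\<lambda>c. riccati T (a c) x)"
proof (rule uniform_limit_theorem[where f = "\<lambda>n c. riccati_approx T (a c) n x" and F = sequentially])
  have nonzero: "riccati_approx T (a c) n y \<noteq> 0" if "c \<in> C" for c n y
    using riccati_approx_bounds[where a = "a c" and T = T and n = n and x = y, OF nonneg[OF that] le[OF that]]
    by linarith
  have "continuous_on C (\<lambda>c. riccati_approx T (a c) n x)" for n
  proof (induction n arbitrary: x)
    case (Suc n)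
    show ?case
      unfolding riccati_approx.simps by (intro continuous_intros cont Suc) (use nonzero in auto)
  qed simp
  then show "\<forall>\<^sub>F n in sequentially. continuous_on C (\<lambda>c. riccati_approx T (a c) n x)"
    by simp
  show "uniform_limit C (\<lambda>n c. riccati_approx T (a c) n x) (\<lambda>c. riccati T (a c) x) sequentially"
  proof (rule uniform_limitI)
    fix \<epsilon> :: real assume "0 < \<epsilon>"
    then obtain N where N: "(1/2::real)^N < \<epsilon>"
      using real_arch_pow_inv[of \<epsilon> "1/2"] by auto
    have "dist (riccati_approx T (a c) n x) (riccati T (a c) x) < \<epsilon>" if "N \<le> n" "c \<in> C" for n c
    proof -
      have "(1/2::real)^n \<le> (1/2)^N" using that by (intro power_decreasing) auto
      moreover have "0 \<le> riccati_approx T (a c) n x - riccati T (a c) x \<and>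
          riccati_approx T (a c) n x - riccati T (a c) x \<le> (1/2)^n"
        using riccati_approx_error[where a = "a c", OF nonneg[OF that(2)] le[OF that(2)]] .
      ultimately show ?thesis
        using N unfolding dist_real_def by linarith
    qed
    then show "\<forall>\<^sub>F n in sequentially. \<forall>c\<in>C. dist (riccati_approx T (a c) n x) (riccati T (a c) x) < \<epsilon>"
      by (auto intro: eventually_sequentiallyI[of N])
  qed
qed simp

section \<open>Series along an orbit\<close>

fun orbit_prod :: "('a \<Rightarrow> 'a) \<Rightarrow> ('a \<Rightarrow> real) \<Rightarrow> nat \<Rightarrow> 'a \<Rightarrow> real" where
  "orbit_prod T s 0 x = 1"
| "orbit_prod T s (Suc k) x = s (T x) * orbit_prod T s k (T x)"

definition orbit_series :: "('a \<Rightarrow> 'a) \<Rightarrow> ('a \<Rightarrow> real) \<Rightarrow> 'a \<Rightarrow> real" where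
  "orbit_series T s x = (\<Sum>k. orbit_prod T s k x)"

lemma measurable_orbit_prod [measurable]:
  assumes [measurable]: "T \<in> M \<rightarrow>\<^sub>M M" "s \<in> borel_measurable M"
  shows "orbit_prod T s k \<in> borel_measurable M"
proof (induction k)
  case (Suc k)
  have [measurable]: "(\<lambda>x. orbit_prod T s k (T x)) \<in> borel_measurable M"
    using measurable_comp[OF assms(1) Suc] by (simp add: comp_def)
  show ?case by (simp only: orbit_prod.simps) measurable
qed simp

lemma measurable_orbit_series [measurable]:
  assumes [measurable]: "T \<in> M \<rightarrow>\<^sub>M M" "s \<in> borel_measurable M"
  shows "orbit_series T s \<in> borel_measurable M"
  unfolding orbit_series_def by measurable

context
  fixes T :: "'a \<Rightarrow> 'a" and s :: "'a \<Rightarrow> real"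
  assumes s_nonneg: "\<And>x. 0 \<le> s x" and s_le: "\<And>x. s x \<le> 1/3"
begin

lemma orbit_prod_bounds: "0 \<le> orbit_prod T s k x \<and> orbit_prod T s k x \<le> (1/3)^k"
proof (induction k arbitrary: x)
  case (Suc k)
  have "s (T x) * orbit_prod T s k (T x) \<le> (1/3) * (1/3)^k"
    using Suc[of "T x"] s_nonneg s_le by (intro mult_mono) auto
  then show ?case using Suc[of "T x"] s_nonneg by simp
qed simp

lemma summable_orbit_prod: "summable (\<lambda>k. orbit_prod T s k x)"
  by (rule summable_comparison_test[of _ "\<lambda>k. (1/3::real)^k"]) (use orbit_prod_bounds in auto)

lemma orbit_series_rec: "orbit_series T s x = 1 + s (T x) * orbit_series T s (T x)"
proof -
  have "orbit_series T s x = orbit_prod T s 0 x + (\<Sum>k. orbit_prod T s (Suc k) x)"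
    unfolding orbit_series_def using suminf_split_head[OF summable_orbit_prod] by simp
  also have "(\<Sum>k. orbit_prod T s (Suc k) x) = s (T x) * orbit_series T s (T x)"
    unfolding orbit_prod.simps orbit_series_def by (rule suminf_mult[OF summable_orbit_prod])
  finally show ?thesis by simp
qed

lemma orbit_series_bounds: "1 \<le> orbit_series T s x \<and> orbit_series T s x \<le> 3/2"
proof -
  have "orbit_series T s x \<le> (\<Sum>k. (1/3::real)^k)"
    unfolding orbit_series_def
    by (rule suminf_le) (use orbit_prod_bounds summable_orbit_prod in auto)
  also have "\<dots> = 3/2" by (subst suminf_geometric) auto
  finally have "orbit_series T s x \<le> 3/2" .
  moreover have "0 \<le> orbit_series T s (T x)"
    unfolding orbit_series_def
    by (rule suminf_nonneg[OF summable_orbit_prod]) (use orbit_prod_bounds in auto)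
  ultimately show ?thesis using orbit_series_rec[of x] s_nonneg[of "T x"] by simp
qed

end

lemma continuous_on_orbit_series:
  assumes cont: "\<And>x. continuous_on C (\<lambda>c. s c x)"
    and nonneg: "\<And>c x. c \<in> C \<Longrightarrow> 0 \<le> s c x" and le: "\<And>c x. c \<in> C \<Longrightarrow> s c x \<le> 1/3"
  shows "continuous_on C (\<lambda>c. orbit_series T (s c) x)"
proof (rule uniform_limit_theorem[where f = "\<lambda>n c. \<Sum>k<n. orbit_prod T (s c) k x" and F = sequentially])
  have "continuous_on C (\<lambda>c. orbit_prod T (s c) k x)" for k
    by (induction k arbitrary: x) (simp_all add: continuous_on_mult cont)
  then show "\<forall>\<^sub>F n in sequentially. continuous_on C (\<lambda>c. \<Sum>k<n. orbit_prod T (s c) k x)"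
    by (simp add: continuous_on_sum)
  have "norm (orbit_prod T (s c) k x) \<le> (1/3)^k" if "c \<in> C" for c k
    using orbit_prod_bounds[where s = "s c", OF nonneg[OF that] le[OF that]] by simp
  then show "uniform_limit C (\<lambda>n c. \<Sum>k<n. orbit_prod T (s c) k x) (\<lambda>c. orbit_series T (s c) x) sequentially"
    unfolding orbit_series_def by (intro Weierstrass_m_test[where M = "\<lambda>k. (1/3::real)^k"]) auto
qed simp

section \<open>Environments and nearest-neighbour steps\<close>

lemma shift_shift [simp]: "shift a (shift b \<omega>) = shift (a + b) \<omega>"
  unfolding shift_def by (simp add: ac_simps)

lemma shift_0 [simp]: "shift 0 \<omega> = \<omega>"
  unfolding shift_def by simp

lemma space_Omega: "space Omega = {\<omega>. is_env \<omega>}"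
  unfolding Omega_def by (simp add: space_restrict_space space_PiM)

lemma is_env_shift: "is_env \<omega> \<Longrightarrow> is_env (shift z \<omega>)"
  unfolding is_env_def shift_def by auto

lemma measurable_site [measurable]: "(\<lambda>\<omega>. \<omega> x) \<in> Omega \<rightarrow>\<^sub>M borel"
  unfolding Omega_def
  by (rule measurable_restrict_space1) (rule measurable_component_singleton, simp)

lemma measurable_shift [measurable]: "shift z \<in> Omega \<rightarrow>\<^sub>M Omega"
proof -
  have "shift z \<in> Omega \<rightarrow>\<^sub>M PiM UNIV (\<lambda>_. borel)"
    unfolding shift_def by (rule measurable_PiM_single') (auto simp: space_PiM)
  then have "shift z \<in> Omega \<rightarrow>\<^sub>M restrict_space (PiM UNIV (\<lambda>_. borel)) {\<omega>. is_env \<omega>}"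
    by (intro measurable_restrict_space2) (auto simp: space_Omega is_env_shift)
  then show ?thesis by (simp add: Omega_def)
qed

lemma measurable_pi0 [measurable]: "(\<lambda>\<omega>. pi0 \<omega> z) \<in> borel_measurable Omega"
proof -
  have "fst \<in> borel_measurable (borel :: (real \<times> real) measure)"
    and "snd \<in> borel_measurable (borel :: (real \<times> real) measure)"
    by (intro borel_measurable_continuous_onI continuous_intros)+
  then have "(\<lambda>\<omega>. fst (\<omega> 0)) \<in> borel_measurable Omega" "(\<lambda>\<omega>. snd (\<omega> 0)) \<in> borel_measurable Omega"
    using measurable_comp[OF measurable_site] by (auto simp: comp_def)
  then show ?thesis
    unfolding pi0_def by (cases "z = 1") simp_all
qed

lemma pi0_bounds: "is_env \<omega> \<Longrightarrow> 0 \<le> pi0 \<omega> z \<and> pi0 \<omega> z \<le> 1"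
  unfolding is_env_def pi0_def by (smt (verit))

lemma finite_U [simp]: "finite U"
  unfolding U_def by simp

lemma U_eq: "e \<in> U \<Longrightarrow> U = {e, -e}"
  unfolding U_def by auto

lemma U_cases: "z \<in> U \<Longrightarrow> z = 1 \<or> z = -1"
  unfolding U_def by auto

lemma sum_U: "e \<in> U \<Longrightarrow> (\<Sum>z\<in>U. f z) = f e + f (-e)"
  unfolding U_def by (auto simp: add.commute)

lemma closed_walk_sum_eq_0:
  fixes G :: "int \<Rightarrow> int \<Rightarrow> real" and xs :: "nat \<Rightarrow> int"
  assumes antisym: "\<And>x. G x 1 + G (x + 1) (-1) = 0"
    and closed: "xs 0 = xs n" and steps: "\<forall>k<n. xs (Suc k) - xs k \<in> U"
  shows "(\<Sum>k<n. G (xs k) (xs (Suc k) - xs k)) = 0"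
proof -
  define V where "V x = (\<Sum>y\<in>{0..<x}. G y 1) - (\<Sum>y\<in>{x..<0}. G y 1)" for x :: int
  have V_step: "V (x + 1) - V x = G x 1" for x
  proof (cases "0 \<le> x")
    case True
    then have "{0..<x + 1} = insert x {0..<x}" "{x + 1..<0} = {}" "{x..<0} = {}" by auto
    then show ?thesis by (simp add: V_def)
  next
    case False
    then have "{0..<x + 1} = {}" "{0..<x} = {}" "{x..<0} = insert x {x + 1..<0}" by auto
    then show ?thesis by (simp add: V_def)
  qed
  have "G x z = V (x + z) - V x" if "z \<in> U" for x z
    using U_cases[OF that] V_step[of x] V_step[of "x - 1"] antisym[of "x - 1"] by auto
  then have "(\<Sum>k<n. G (xs k) (xs (Suc k) - xs k)) = (\<Sum>k<n. V (xs (Suc k)) - V (xs k))"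
    using steps by (intro sum.cong) auto
  also have "\<dots> = 0" using closed by (simp add: sum_lessThan_telescope[of "\<lambda>k. V (xs k)"])
  finally show ?thesis .
qed

definition gradient_field :: "int \<Rightarrow> (env \<Rightarrow> real) \<Rightarrow> env \<Rightarrow> int \<Rightarrow> real" where
  "gradient_field e G \<omega> z = (if z = e then G \<omega> else - G (shift (-e) \<omega>))"

lemma gradient_field_antisym:
  assumes "e \<in> U"
  shows "gradient_field e G (shift x \<omega>) 1 + gradient_field e G (shift (x + 1) \<omega>) (-1) = 0"
  using U_cases[OF assms] by (auto simp: gradient_field_def ac_simps)

section \<open>Stationary environments\<close>

lemma abs_add_powr_le:
  fixes a b p :: real
  assumes "0 \<le> p"
  shows "\<bar>a + b\<bar> powr p \<le> 2 powr p * (\<bar>a\<bar> powr p + \<bar>b\<bar> powr p)"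
proof -
  have "\<bar>a + b\<bar> powr p \<le> (2 * max \<bar>a\<bar> \<bar>b\<bar>) powr p"
    using assms by (intro powr_mono2) auto
  also have "\<dots> = 2 powr p * max \<bar>a\<bar> \<bar>b\<bar> powr p"
    by (simp add: powr_mult)
  also have "\<dots> \<le> 2 powr p * (\<bar>a\<bar> powr p + \<bar>b\<bar> powr p)"
    by (intro mult_left_mono) (auto simp: max_def)
  finally show ?thesis .
qed

locale stationary_env =
  fixes P :: "env measure"
  assumes stationary_ergodic: "stationary_ergodic P"
begin

sublocale prob_space P
  using stationary_ergodic unfolding stationary_ergodic_def by blast

lemma measure_space_P [simp]: "measure P (space P) = 1"
  using prob_space_axioms by (rule prob_space.prob_space)

lemma sets_P: "sets P = sets Omega"
  using stationary_ergodic unfolding stationary_ergodic_def by blast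

lemma space_P: "space P = space Omega"
  using sets_eq_imp_space_eq[OF sets_P] .

lemma measurable_P: "measurable P = measurable Omega"
  by (intro ext measurable_cong_sets[OF sets_P refl])

lemma distr_shift: "distr P P (shift z) = P"
  using stationary_ergodic unfolding stationary_ergodic_def by blast

lemma measurable_shift_P: "shift z \<in> P \<rightarrow>\<^sub>M P"
  using measurable_shift by (simp add: measurable_P measurable_cong_sets[OF refl sets_P])

lemma nn_integral_shift:
  assumes "f \<in> borel_measurable Omega"
  shows "(\<integral>\<^sup>+\<omega>. f (shift z \<omega>) \<partial>P) = integral\<^sup>N P f"
  using nn_integral_distr[OF measurable_shift_P, of f] assms by (simp add: measurable_P distr_shift)

lemma integral_shift:
  fixes f :: "env \<Rightarrow> real"
  assumes "f \<in> borel_measurable Omega"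
  shows "(\<integral>\<omega>. f (shift z \<omega>) \<partial>P) = integral\<^sup>L P f"
  using integral_distr[OF measurable_shift_P, of f] assms by (simp add: measurable_P distr_shift)

lemma integrable_shift:
  fixes f :: "env \<Rightarrow> real"
  assumes "integrable P f"
  shows "integrable P (\<lambda>\<omega>. f (shift z \<omega>))"
  using integrable_distr_eq[OF measurable_shift_P, of f] assms by (simp add: distr_shift)

lemma AE_shift:
  assumes "AE \<omega> in P. Q \<omega>"
  shows "AE \<omega> in P. Q (shift z \<omega>)"
proof -
  have "AE \<omega> in distr P P (shift z). Q \<omega>"
    unfolding distr_shift using assms .
  then show ?thesis
    by (rule AE_distrD[OF measurable_shift_P])
qed

lemma AE_env: "AE \<omega> in P. is_env \<omega>"
  by (rule AE_I2) (simp add: space_P space_Omega)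

lemma integrable_bounded:
  fixes f :: "env \<Rightarrow> real"
  assumes "f \<in> borel_measurable Omega" and "\<And>\<omega>. \<bar>f \<omega>\<bar> \<le> B"
  shows "integrable P f"
proof (rule integrable_const_bound[where B = B])
  show "AE \<omega> in P. norm (f \<omega>) \<le> B"
    using assms(2) by (intro AE_I2) simp
  show "f \<in> borel_measurable P"
    using assms(1) by (simp add: measurable_P)
qed

lemma integrable_of_integrable_abs_powr:
  fixes f :: "env \<Rightarrow> real"
  assumes "f \<in> borel_measurable Omega" and "1 \<le> p" and "integrable P (\<lambda>\<omega>. \<bar>f \<omega>\<bar> powr p)"
  shows "integrable P f"
proof (rule Bochner_Integration.integrable_bound)
  show "integrable P (\<lambda>\<omega>. 1 + \<bar>f \<omega>\<bar> powr p)"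
    using assms(3) by simp
  have "\<bar>x\<bar> \<le> 1 + \<bar>x\<bar> powr p" for x :: real
  proof (cases "\<bar>x\<bar> \<le> 1")
    case False
    then have "\<bar>x\<bar> powr 1 \<le> \<bar>x\<bar> powr p" using assms(2) by (intro powr_mono) auto
    then show ?thesis by simp
  qed (smt (verit) powr_ge_zero)
  then show "AE \<omega> in P. norm (f \<omega>) \<le> norm (1 + \<bar>f \<omega>\<bar> powr p)"
    by (intro AE_I2) (simp add: add_nonneg_nonneg)
qed (use assms(1) in \<open>simp add: measurable_P\<close>)

lemma integrable_abs_powr_add_bounded:
  fixes f g :: "env \<Rightarrow> real"
  assumes "0 \<le> p" and [measurable]: "f \<in> borel_measurable Omega" "g \<in> borel_measurable Omega"
    and bounded: "\<And>\<omega>. \<bar>f \<omega>\<bar> \<le> K" and integrable: "integrable P (\<lambda>\<omega>. \<bar>g \<omega>\<bar> powr p)"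
  shows "integrable P (\<lambda>\<omega>. \<bar>f \<omega> + g \<omega>\<bar> powr p)"
proof (rule Bochner_Integration.integrable_bound)
  show "integrable P (\<lambda>\<omega>. 2 powr p * (K powr p + \<bar>g \<omega>\<bar> powr p))"
    using integrable by simp
  have "\<bar>f \<omega> + g \<omega>\<bar> powr p \<le> 2 powr p * (K powr p + \<bar>g \<omega>\<bar> powr p)" for \<omega>
    using abs_add_powr_le[OF assms(1), of "f \<omega>" "g \<omega>"] powr_mono2[OF assms(1) _ bounded[of \<omega>]]
    by (smt (verit) mult_left_mono powr_ge_zero)
  then show "AE \<omega> in P. norm (\<bar>f \<omega> + g \<omega>\<bar> powr p) \<le> norm (2 powr p * (K powr p + \<bar>g \<omega>\<bar> powr p))"
    by (intro AE_I2) (simp add: add_nonneg_nonneg)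
qed (simp add: measurable_P)

lemma gradient_field_in_classK:
  assumes e: "e \<in> U" and [measurable]: "G \<in> borel_measurable Omega"
    and \<alpha>: "0 < \<alpha>" "integrable P (\<lambda>\<omega>. \<bar>G \<omega>\<bar> powr (1 + \<alpha>))"
    and mean: "(\<integral>\<omega>. G \<omega> \<partial>P) = 0"
  shows "gradient_field e G \<in> classK P"
  unfolding classK_def
proof (intro CollectI conjI)
  show "\<forall>z\<in>U. (\<lambda>\<omega>. gradient_field e G \<omega> z) \<in> borel_measurable Omega"
    unfolding gradient_field_def by measurable
  have "integrable P (\<lambda>\<omega>. \<bar>gradient_field e G \<omega> z\<bar> powr (1 + \<alpha>))" for z
    using \<alpha>(2) integrable_shift[OF \<alpha>(2), of "-e"] by (cases "z = e") (simp_all add: gradient_field_def)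
  then show "\<exists>\<alpha>>0. \<forall>z\<in>U. integrable P (\<lambda>\<omega>. \<bar>gradient_field e G \<omega> z\<bar> powr (1 + \<alpha>))"
    using \<alpha>(1) by blast
  have "(\<integral>\<omega>. gradient_field e G \<omega> z \<partial>P) = 0" for z
    using mean integral_shift[of G "-e"] by (cases "z = e") (simp_all add: gradient_field_def)
  then show "\<forall>z\<in>U. (\<integral>\<omega>. gradient_field e G \<omega> z \<partial>P) = 0"
    by blast
  show "AE \<omega> in P. \<forall>n (xs :: nat \<Rightarrow> int). xs 0 = xs n \<and> (\<forall>k<n. xs (Suc k) - xs k \<in> U) \<longrightarrow>
      (\<Sum>k<n. gradient_field e G (shift (xs k) \<omega>) (xs (Suc k) - xs k)) = 0"
  proof (intro AE_I2 allI impI)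
    fix \<omega> n and xs :: "nat \<Rightarrow> int"
    assume "xs 0 = xs n \<and> (\<forall>k<n. xs (Suc k) - xs k \<in> U)"
    then show "(\<Sum>k<n. gradient_field e G (shift (xs k) \<omega>) (xs (Suc k) - xs k)) = 0"
      using closed_walk_sum_eq_0[of "\<lambda>x z. gradient_field e G (shift x \<omega>) z" xs n]
        gradient_field_antisym[OF e] by blast
  qed
qed

end

section \<open>Chains driven by a kernel\<close>

locale kernel_chain = stationary_env +
  fixes f :: "env \<Rightarrow> real" and k :: "env \<Rightarrow> int \<Rightarrow> real"
  assumes f_measurable [measurable]: "f \<in> borel_measurable Omega"
    and k_measurable [measurable]: "\<And>z. (\<lambda>\<omega>. k \<omega> z) \<in> borel_measurable Omega"
    and f_nonneg: "\<And>\<omega>. 0 \<le> f \<omega>"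
    and f_integrable: "integrable P f"
    and f_integral: "(\<integral>\<omega>. f \<omega> \<partial>P) = 1"
    and k_nonneg: "\<And>\<omega> z. 0 \<le> k \<omega> z"
    and k_sum: "\<And>\<omega>. (\<Sum>z\<in>U. k \<omega> z) = 1"
begin

definition chain_measure :: "(env \<times> int) measure" where
  "chain_measure = density (P \<Otimes>\<^sub>M count_space U) (\<lambda>p. ennreal (f (fst p) * k (fst p) (snd p)))"

lemma measurable_k_pair [measurable]:
  "(\<lambda>p. k (fst p) (snd p)) \<in> borel_measurable (Omega \<Otimes>\<^sub>M count_space U)"
  by (rule measurable_compose_countable'[where I = U]) (auto simp: countable_finite U_def)

lemma k_le_1: "z \<in> U \<Longrightarrow> k \<omega> z \<le> 1"
  using member_le_sum[of z U "k \<omega>"] k_nonneg k_sum by (auto simp: U_def)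

lemma sets_chain_measure: "sets chain_measure = sets OmegaU"
  unfolding chain_measure_def OmegaU_def by (simp add: sets_pair_measure_cong[OF sets_P refl])

lemma space_chain_measure: "space chain_measure = space Omega \<times> U"
  using sets_eq_imp_space_eq[OF sets_chain_measure] by (simp add: OmegaU_def space_pair_measure)

lemma measurable_chain_measure: "measurable chain_measure = measurable OmegaU"
  by (intro ext measurable_cong_sets[OF sets_chain_measure refl])

lemma emeasure_chain_measure:
  assumes X: "X \<in> sets OmegaU"
  shows "emeasure chain_measure X =
    (\<integral>\<^sup>+\<omega>. (\<Sum>z\<in>U. ennreal (f \<omega> * k \<omega> z) * indicator X (\<omega>, z)) \<partial>P)"
proof -
  have sets_PU: "sets (P \<Otimes>\<^sub>M count_space U) = sets OmegaU"
    unfolding OmegaU_def by (rule sets_pair_measure_cong[OF sets_P refl])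
  have [measurable]: "X \<in> sets (Omega \<Otimes>\<^sub>M count_space U)"
    using X by (simp add: OmegaU_def)
  let ?F = "\<lambda>p. ennreal (f (fst p) * k (fst p) (snd p)) * indicator X p"
  have "emeasure chain_measure X = integral\<^sup>N (P \<Otimes>\<^sub>M count_space U) ?F"
    unfolding chain_measure_def
    by (rule emeasure_density) (use X in \<open>auto simp: sets_PU measurable_cong_sets[OF sets_PU refl] OmegaU_def\<close>)
  also have "\<dots> = (\<integral>\<^sup>+\<omega>. \<integral>\<^sup>+z. ?F (\<omega>, z) \<partial>count_space U \<partial>P)"
    by (rule sigma_finite_measure.nn_integral_fst[symmetric])
       (auto intro: sigma_finite_measure_count_space_finite
             simp: measurable_cong_sets[OF sets_PU refl] OmegaU_def)
  also have "\<dots> = (\<integral>\<^sup>+\<omega>. (\<Sum>z\<in>U. ennreal (f \<omega> * k \<omega> z) * indicator X (\<omega>, z)) \<partial>P)"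
    by (simp add: nn_integral_count_space_finite)
  finally show ?thesis .
qed

lemma emeasure_chain_measure_slice:
  assumes "A \<in> sets Omega" and "z \<in> U"
  shows "emeasure chain_measure (A \<times> {z}) = (\<integral>\<^sup>+\<omega>. ennreal (f \<omega> * k \<omega> z) * indicator A \<omega> \<partial>P)"
proof -
  have "(\<Sum>z'\<in>U. ennreal (f \<omega> * k \<omega> z') * indicator (A \<times> {z}) (\<omega>, z'))
      = ennreal (f \<omega> * k \<omega> z) * indicator A \<omega>" for \<omega>
  proof -
    have "(\<Sum>z'\<in>U. ennreal (f \<omega> * k \<omega> z') * indicator (A \<times> {z}) (\<omega>, z'))
        = (\<Sum>z'\<in>U. if z' = z then ennreal (f \<omega> * k \<omega> z) * indicator A \<omega> else 0)"
      by (intro sum.cong) (auto simp: indicator_def)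
    then show ?thesis using assms(2) by (simp add: sum.delta)
  qed
  then show ?thesis
    using assms by (simp add: emeasure_chain_measure OmegaU_def)
qed

lemma emeasure_chain_measure_times_U:
  assumes "A \<in> sets Omega"
  shows "emeasure chain_measure (A \<times> U) = (\<integral>\<^sup>+\<omega>. ennreal (f \<omega>) * indicator A \<omega> \<partial>P)"
proof -
  have "(\<Sum>z\<in>U. ennreal (f \<omega> * k \<omega> z) * indicator (A \<times> U) (\<omega>, z)) = ennreal (f \<omega>) * indicator A \<omega>" for \<omega>
  proof -
    have "(\<Sum>z\<in>U. ennreal (f \<omega> * k \<omega> z)) = ennreal (\<Sum>z\<in>U. f \<omega> * k \<omega> z)"
      using f_nonneg k_nonneg by (intro sum_ennreal) simp
    then show ?thesis
      by (simp add: indicator_def sum_distrib_right[symmetric] sum_distrib_left[symmetric] k_sum)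
  qed
  then show ?thesis
    using assms by (simp add: emeasure_chain_measure OmegaU_def)
qed

lemma marg1_chain_measure: "marg1 chain_measure = density P f"
proof (rule measure_eqI)
  show "sets (marg1 chain_measure) = sets (density P f)"
    by (simp add: marg1_def sets_P)
  fix A assume "A \<in> sets (marg1 chain_measure)"
  then have A [measurable]: "A \<in> sets Omega" by (simp add: marg1_def)
  have "fst -` A \<inter> space chain_measure = A \<times> U"
    using sets.sets_into_space[OF A] by (auto simp: space_chain_measure)
  then have "emeasure (marg1 chain_measure) A = emeasure chain_measure (A \<times> U)"
    unfolding marg1_def by (subst emeasure_distr) (auto simp: measurable_chain_measure OmegaU_def)
  also have "\<dots> = emeasure (density P f) A"
    using A by (simp add: emeasure_chain_measure_times_U emeasure_density measurable_P sets_P)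
  finally show "emeasure (marg1 chain_measure) A = emeasure (density P f) A" .
qed

lemma chain_measure_in_M1: "chain_measure \<in> M1"
proof -
  have "emeasure chain_measure (space chain_measure) = (\<integral>\<^sup>+\<omega>. ennreal (f \<omega>) * indicator (space Omega) \<omega> \<partial>P)"
    unfolding space_chain_measure by (rule emeasure_chain_measure_times_U) simp
  also have "\<dots> = (\<integral>\<^sup>+\<omega>. ennreal (f \<omega>) \<partial>P)"
    by (intro nn_integral_cong) (simp add: space_P)
  also have "\<dots> = ennreal (\<integral>\<omega>. f \<omega> \<partial>P)"
    by (rule nn_integral_eq_integral[OF f_integrable]) (simp add: f_nonneg)
  finally show ?thesis
    unfolding M1_def using f_integral sets_chain_measure by (auto intro: prob_spaceI)
qed

lemma measurable_step: "(\<lambda>p. shift (snd p) (fst p)) \<in> chain_measure \<rightarrow>\<^sub>M Omega"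
  unfolding measurable_chain_measure OmegaU_def
  by (rule measurable_compose_countable'[where I = U]) (auto simp: countable_finite U_def)

lemma emeasure_step_preimage:
  assumes A: "A \<in> sets Omega"
  shows "emeasure chain_measure ((\<lambda>p. shift (snd p) (fst p)) -` A \<inter> space chain_measure) =
    (\<integral>\<^sup>+\<omega>. (\<Sum>z\<in>U. ennreal (f \<omega> * k \<omega> z) * indicator A (shift z \<omega>)) \<partial>P)"
proof -
  let ?X = "(\<lambda>p. shift (snd p) (fst p)) -` A \<inter> space chain_measure"
  have X: "?X \<in> sets OmegaU"
    using measurable_sets[OF measurable_step A] by (simp add: sets_chain_measure)
  have "indicator ?X (\<omega>, z) = (indicator A (shift z \<omega>) :: ennreal)"
    if "\<omega> \<in> space P" "z \<in> U" for \<omega> z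
    using that by (simp add: indicator_def space_chain_measure space_P)
  then show ?thesis
    unfolding emeasure_chain_measure[OF X] by (intro nn_integral_cong sum.cong refl) simp
qed

lemma marg2_chain_measure:
  "marg2 chain_measure = density P (\<lambda>\<omega>. \<Sum>z\<in>U. f (shift (-z) \<omega>) * k (shift (-z) \<omega>) z)"
proof (rule measure_eqI)
  show "sets (marg2 chain_measure) = sets (density P (\<lambda>\<omega>. \<Sum>z\<in>U. f (shift (-z) \<omega>) * k (shift (-z) \<omega>) z))"
    by (simp add: marg2_def sets_P)
  fix A assume "A \<in> sets (marg2 chain_measure)"
  then have A [measurable]: "A \<in> sets Omega" by (simp add: marg2_def)
  let ?g = "\<lambda>z \<omega>. ennreal (f \<omega> * k \<omega> z) * indicator A (shift z \<omega>)"
  have g_measurable: "?g z \<in> borel_measurable Omega" for z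
    by measurable
  have "emeasure (marg2 chain_measure) A = (\<integral>\<^sup>+\<omega>. (\<Sum>z\<in>U. ?g z \<omega>) \<partial>P)"
    unfolding marg2_def case_prod_beta' emeasure_distr[OF measurable_step A]
    by (rule emeasure_step_preimage[OF A])
  also have "\<dots> = (\<Sum>z\<in>U. \<integral>\<^sup>+\<omega>. ?g z \<omega> \<partial>P)"
    by (rule nn_integral_sum) (simp add: measurable_P g_measurable)
  also have "\<dots> = (\<Sum>z\<in>U. \<integral>\<^sup>+\<omega>. ?g z (shift (-z) \<omega>) \<partial>P)"
    by (rule sum.cong[OF refl], rule nn_integral_shift[OF g_measurable, symmetric])
  also have "\<dots> = (\<integral>\<^sup>+\<omega>. (\<Sum>z\<in>U. ?g z (shift (-z) \<omega>)) \<partial>P)"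
    by (rule nn_integral_sum[symmetric]) (simp add: measurable_P)
  also have "\<dots> = (\<integral>\<^sup>+\<omega>. ennreal (\<Sum>z\<in>U. f (shift (-z) \<omega>) * k (shift (-z) \<omega>) z) * indicator A \<omega> \<partial>P)"
    by (intro nn_integral_cong) (simp add: sum_distrib_right[symmetric] f_nonneg k_nonneg)
  also have "\<dots> = emeasure (density P (\<lambda>\<omega>. \<Sum>z\<in>U. f (shift (-z) \<omega>) * k (shift (-z) \<omega>) z)) A"
    by (simp add: emeasure_density measurable_P sets_P)
  finally show "emeasure (marg2 chain_measure) A =
      emeasure (density P (\<lambda>\<omega>. \<Sum>z\<in>U. f (shift (-z) \<omega>) * k (shift (-z) \<omega>) z)) A" .
qed

lemma emeasure_chain_measure_slice_marg1:
  assumes A: "A \<in> sets Omega" and z: "z \<in> U"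
    and [measurable]: "g \<in> borel_measurable Omega" and g: "AE \<omega> in P. g \<omega> = k \<omega> z"
  shows "emeasure chain_measure (A \<times> {z}) = (\<integral>\<^sup>+\<omega>. ennreal (g \<omega>) * indicator A \<omega> \<partial>marg1 chain_measure)"
proof -
  have "(\<integral>\<^sup>+\<omega>. ennreal (g \<omega>) * indicator A \<omega> \<partial>marg1 chain_measure)
      = (\<integral>\<^sup>+\<omega>. ennreal (f \<omega>) * (ennreal (g \<omega>) * indicator A \<omega>) \<partial>P)"
    unfolding marg1_chain_measure using A by (intro nn_integral_density) (auto simp: measurable_P)
  also have "\<dots> = (\<integral>\<^sup>+\<omega>. ennreal (f \<omega> * k \<omega> z) * indicator A \<omega> \<partial>P)"
    using g by (intro nn_integral_cong_AE, eventually_elim)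
      (simp add: ennreal_mult f_nonneg k_nonneg mult.assoc)
  finally show ?thesis
    using emeasure_chain_measure_slice[OF A z] by simp
qed

lemma chain_measure_in_M1s_ac:
  assumes invariant: "AE \<omega> in P. (\<Sum>z\<in>U. f (shift (-z) \<omega>) * k (shift (-z) \<omega>) z) = f \<omega>"
    and positive: "AE \<omega> in P. \<forall>z\<in>U. 0 < k \<omega> z"
  shows "chain_measure \<in> M1s_ac P"
  unfolding M1s_ac_def
proof (intro CollectI conjI)
  show "chain_measure \<in> M1" by (rule chain_measure_in_M1)
  show "marg1 chain_measure = marg2 chain_measure"
    unfolding marg1_chain_measure marg2_chain_measure
  proof (rule density_cong)
    show "AE \<omega> in P. ennreal (f \<omega>) = ennreal (\<Sum>z\<in>U. f (shift (-z) \<omega>) * k (shift (-z) \<omega>) z)"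
      using invariant by eventually_elim simp
  qed (simp_all add: measurable_P)
  show "absolutely_continuous P (marg1 chain_measure)"
    unfolding marg1_chain_measure by (intro absolutely_continuousI_density) (simp add: measurable_P)
  show "\<exists>g :: int \<Rightarrow> env \<Rightarrow> real. \<forall>z\<in>U. g z \<in> borel_measurable Omega \<and> (AE \<omega> in P. 0 < g z \<omega>) \<and>
      (\<forall>A\<in>sets Omega. emeasure chain_measure (A \<times> {z}) =
         (\<integral>\<^sup>+\<omega>. ennreal (g z \<omega>) * indicator A \<omega> \<partial>marg1 chain_measure))"
  proof (intro exI[of _ "\<lambda>z \<omega>. k \<omega> z"] ballI conjI)
    fix z assume z: "z \<in> U"
    show "(\<lambda>\<omega>. k \<omega> z) \<in> borel_measurable Omega" by simp
    show "AE \<omega> in P. 0 < k \<omega> z"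
      using positive by eventually_elim (use z in blast)
    fix A assume "A \<in> sets Omega"
    then show "emeasure chain_measure (A \<times> {z}) =
        (\<integral>\<^sup>+\<omega>. ennreal (k \<omega> z) * indicator A \<omega> \<partial>marg1 chain_measure)"
      by (rule emeasure_chain_measure_slice_marg1[OF _ z k_measurable]) simp
  qed
qed

lemma integrable_f_times_k: "z \<in> U \<Longrightarrow> integrable P (\<lambda>\<omega>. f \<omega> * k \<omega> z)"
proof (rule Bochner_Integration.integrable_bound[OF f_integrable])
  show "z \<in> U \<Longrightarrow> AE \<omega> in P. norm (f \<omega> * k \<omega> z) \<le> norm (f \<omega>)"
    using k_le_1 f_nonneg k_nonneg by (intro AE_I2) (simp add: mult_left_le)
qed (simp add: measurable_P)

lemma measure_chain_measure_slice:
  assumes "z \<in> U"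
  shows "measure chain_measure (space Omega \<times> {z}) = (\<integral>\<omega>. f \<omega> * k \<omega> z \<partial>P)"
proof -
  have "emeasure chain_measure (space Omega \<times> {z}) =
      (\<integral>\<^sup>+\<omega>. ennreal (f \<omega> * k \<omega> z) * indicator (space Omega) \<omega> \<partial>P)"
    by (rule emeasure_chain_measure_slice[OF _ assms]) simp
  also have "\<dots> = (\<integral>\<^sup>+\<omega>. ennreal (f \<omega> * k \<omega> z) \<partial>P)"
    by (intro nn_integral_cong) (simp add: space_P)
  also have "\<dots> = ennreal (\<integral>\<omega>. f \<omega> * k \<omega> z \<partial>P)"
    by (rule nn_integral_eq_integral[OF integrable_f_times_k[OF assms]]) (simp add: f_nonneg k_nonneg)
  finally show ?thesis
    using integral_nonneg_AE[of "\<lambda>\<omega>. f \<omega> * k \<omega> z" P] f_nonneg k_nonneg by (simp add: measure_def)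
qed

lemma mean_step_chain_measure:
  "(\<integral>p. real_of_int (snd p) \<partial>chain_measure) = (\<integral>\<omega>. f \<omega> * (k \<omega> 1 - k \<omega> (-1)) \<partial>P)"
proof -
  interpret chain: prob_space chain_measure
    using chain_measure_in_M1 unfolding M1_def by blast
  let ?slice = "\<lambda>z. space Omega \<times> {z}"
  have "(\<integral>p. real_of_int (snd p) \<partial>chain_measure) =
      (\<integral>p. indicator (?slice 1) p - indicator (?slice (-1)) p \<partial>chain_measure)"
  proof (rule Bochner_Integration.integral_cong[OF refl])
    fix p assume "p \<in> space chain_measure"
    then have "fst p \<in> space Omega" "snd p = 1 \<or> snd p = -1"
      by (auto simp: space_chain_measure U_def)
    then show "real_of_int (snd p) = indicator (?slice 1) p - indicator (?slice (-1)) p"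
      by (cases p) (auto simp: indicator_def)
  qed
  also have "\<dots> = measure chain_measure (?slice 1) - measure chain_measure (?slice (-1))"
  proof -
    have "?slice 1 \<in> sets chain_measure" "?slice (-1) \<in> sets chain_measure"
      by (auto simp: sets_chain_measure OmegaU_def U_def)
    then show ?thesis
      by (simp add: Bochner_Integration.integral_diff less_top[symmetric] Int_absorb2 sets.sets_into_space)
  qed
  also have "\<dots> = (\<integral>\<omega>. f \<omega> * (k \<omega> 1 - k \<omega> (-1)) \<partial>P)"
    using integrable_f_times_k[of 1] integrable_f_times_k[of "-1"]
    by (simp add: measure_chain_measure_slice U_def right_diff_distrib Bochner_Integration.integral_diff)
  finally show ?thesis .
qed

end

section \<open>The tilted chain\<close>

text \<open>\<open>bond e \<omega>\<close> is \<open>\<pi>(-e, 0) \<pi>(0, -e)\<close>, the product of the two transition probabilities across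
  the bond \<open>{-e, 0}\<close>. On environments the clamp to \<open>[0, 1]\<close> does nothing; it makes the
  bounds of the Riccati iteration hold on all of \<open>env\<close>.\<close>

definition bond :: "int \<Rightarrow> env \<Rightarrow> real" where
  "bond e \<omega> = max 0 (min 1 (pi0 (shift (-e) \<omega>) e * pi0 \<omega> (-e)))"

definition tilt_prob :: "int \<Rightarrow> real \<Rightarrow> env \<Rightarrow> real" where
  "tilt_prob e c = riccati (shift (-e)) (\<lambda>\<omega>. c * bond e \<omega>)"

definition tilt_kernel :: "int \<Rightarrow> real \<Rightarrow> env \<Rightarrow> int \<Rightarrow> real" where
  "tilt_kernel e c \<omega> z = (if z = e then tilt_prob e c \<omega> else 1 - tilt_prob e c \<omega>)"

definition tilt_odds :: "int \<Rightarrow> real \<Rightarrow> env \<Rightarrow> real" where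
  "tilt_odds e c \<omega> = (1 - tilt_prob e c \<omega>) / tilt_prob e c \<omega>"

text \<open>The bounded solution \<open>h\<close> of the flux equation \<open>h q - (h \<circ> T_e) (1 - q \<circ> T_e) = 1\<close>,
  obtained by iterating it along the orbit of \<open>T_e\<close>.\<close>

definition tilt_weight :: "int \<Rightarrow> real \<Rightarrow> env \<Rightarrow> real" where
  "tilt_weight e c \<omega> = orbit_series (shift e) (tilt_odds e c) \<omega> / tilt_prob e c \<omega>"

lemma bond_bounds: "0 \<le> bond e \<omega>" "bond e \<omega> \<le> 1"
  unfolding bond_def by auto

lemma measurable_bond [measurable]: "bond e \<in> borel_measurable Omega"
  unfolding bond_def by measurable

lemma measurable_tilt_prob [measurable]: "tilt_prob e c \<in> borel_measurable Omega"
  unfolding tilt_prob_def by measurable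

lemma measurable_tilt_odds [measurable]: "tilt_odds e c \<in> borel_measurable Omega"
  unfolding tilt_odds_def by measurable

lemma measurable_tilt_weight [measurable]: "tilt_weight e c \<in> borel_measurable Omega"
  unfolding tilt_weight_def by measurable

lemma measurable_tilt_kernel [measurable]: "(\<lambda>\<omega>. tilt_kernel e c \<omega> z) \<in> borel_measurable Omega"
  unfolding tilt_kernel_def by measurable

context
  fixes e :: int and c :: real
  assumes c_nonneg: "0 \<le> c" and c_le: "c \<le> 1/8"
begin

lemma bond_scaled_bounds: "0 \<le> c * bond e \<omega>" "c * bond e \<omega> \<le> 1/8"
  using mult_mono[OF c_le bond_bounds(2)] c_nonneg bond_bounds(1)[of e \<omega>] by simp_all

lemma tilt_prob_bounds: "3/4 \<le> tilt_prob e c \<omega>" "tilt_prob e c \<omega> \<le> 1"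
  unfolding tilt_prob_def using bond_scaled_bounds by (intro riccati_bounds; simp)+

lemma tilt_prob_fixpoint: "tilt_prob e c \<omega> = 1 - c * bond e \<omega> / tilt_prob e c (shift (-e) \<omega>)"
  unfolding tilt_prob_def using bond_scaled_bounds by (intro riccati_fixpoint) simp_all

lemma tilt_odds_bounds: "0 \<le> tilt_odds e c \<omega>" "tilt_odds e c \<omega> \<le> 1/3"
proof -
  have q: "3/4 \<le> tilt_prob e c \<omega>" "tilt_prob e c \<omega> \<le> 1" by (rule tilt_prob_bounds)+
  then show "0 \<le> tilt_odds e c \<omega>" by (simp add: tilt_odds_def)
  have "(1 - tilt_prob e c \<omega>) / tilt_prob e c \<omega> \<le> (1/4) / (3/4)"
    using q by (intro frac_le) auto
  then show "tilt_odds e c \<omega> \<le> 1/3" by (simp add: tilt_odds_def)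
qed

lemmas tilt_series_rec = orbit_series_rec[where T = "shift e" and s = "tilt_odds e c", OF tilt_odds_bounds]
lemmas tilt_series_bounds = orbit_series_bounds[where T = "shift e" and s = "tilt_odds e c", OF tilt_odds_bounds]

lemma tilt_weight_bounds: "1 \<le> tilt_weight e c \<omega> \<and> tilt_weight e c \<omega> \<le> 2"
proof -
  have q: "3/4 \<le> tilt_prob e c \<omega>" "tilt_prob e c \<omega> \<le> 1" by (rule tilt_prob_bounds)+
  let ?S = "orbit_series (shift e) (tilt_odds e c) \<omega>"
  have S: "1 \<le> ?S" "?S \<le> 3/2" using tilt_series_bounds by auto
  have "?S / tilt_prob e c \<omega> \<le> (3/2) / (3/4)" using q S by (intro frac_le) auto
  then show ?thesis using q S unfolding tilt_weight_def by simp
qed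

lemma tilt_weight_flux:
  "tilt_weight e c \<omega> * tilt_prob e c \<omega> - tilt_weight e c (shift e \<omega>) * (1 - tilt_prob e c (shift e \<omega>)) = 1"
  using tilt_series_rec[of \<omega>] tilt_prob_bounds(1)[of \<omega>] tilt_prob_bounds(1)[of "shift e \<omega>"]
  by (simp add: tilt_weight_def tilt_odds_def)

lemma tilt_weight_invariant:
  "tilt_weight e c (shift (-e) \<omega>) * tilt_prob e c (shift (-e) \<omega>)
     + tilt_weight e c (shift e \<omega>) * (1 - tilt_prob e c (shift e \<omega>)) = tilt_weight e c \<omega>"
proof -
  have "tilt_weight e c (shift (-e) \<omega>) * tilt_prob e c (shift (-e) \<omega>)
      - tilt_weight e c \<omega> * (1 - tilt_prob e c \<omega>) = 1"
    using tilt_weight_flux[of "shift (-e) \<omega>"] by simp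
  then show ?thesis
    using tilt_weight_flux[of \<omega>] unfolding right_diff_distrib mult_1_right by linarith
qed

lemma tilt_weight_ge: "1 + c * bond e \<omega> \<le> tilt_weight e c \<omega>"
proof -
  define q where "q = tilt_prob e c \<omega>"
  have q: "3/4 \<le> q" "q \<le> 1" using tilt_prob_bounds unfolding q_def by auto
  have "c * bond e \<omega> \<le> c * bond e \<omega> / tilt_prob e c (shift (-e) \<omega>)"
    using bond_scaled_bounds(1) tilt_prob_bounds[of "shift (-e) \<omega>"] by (simp add: le_divide_eq mult_left_le)
  also have "\<dots> = 1 - q"
    using tilt_prob_fixpoint[of \<omega>] unfolding q_def by simp
  finally have "1 + c * bond e \<omega> \<le> 2 - q" by simp
  also have "2 - q \<le> 1 / q"
  proof -
    have "0 \<le> (1 - q)\<^sup>2" by simp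
    then have "q * (2 - q) \<le> 1" by (simp add: power2_eq_square algebra_simps)
    then show ?thesis using q by (simp add: le_divide_eq mult.commute)
  qed
  also have "1 / q \<le> tilt_weight e c \<omega>"
    using tilt_series_bounds[of \<omega>] q unfolding tilt_weight_def q_def[symmetric] by (simp add: divide_right_mono)
  finally show ?thesis .
qed

end

lemma tilt_prob_0: "tilt_prob e 0 \<omega> = 1"
  using tilt_prob_fixpoint[of 0 e \<omega>] by simp

lemma tilt_weight_0: "tilt_weight e 0 \<omega> = 1"
  using tilt_series_rec[of 0 e \<omega>] by (simp add: tilt_weight_def tilt_odds_def tilt_prob_0)

lemma continuous_on_tilt_prob: "continuous_on {0..1/8} (\<lambda>c. tilt_prob e c \<omega>)"
  unfolding tilt_prob_def
proof (rule continuous_on_riccati)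
  show "continuous_on {0..1/8} (\<lambda>c. c * bond e \<eta>)" for \<eta>
    by (intro continuous_intros)
  show "0 \<le> c * bond e \<eta>" "c * bond e \<eta> \<le> 1/8" if "c \<in> {0..1/8}" for c \<eta>
    using bond_scaled_bounds[of c e \<eta>] that by auto
qed

lemma continuous_on_tilt_weight: "continuous_on {0..1/8} (\<lambda>c. tilt_weight e c \<omega>)"
proof -
  have nonzero: "tilt_prob e c \<eta> \<noteq> 0" if "c \<in> {0..1/8}" for c \<eta>
    using tilt_prob_bounds(1)[of c e \<eta>] that by auto
  have "continuous_on {0..1/8} (\<lambda>c. tilt_odds e c \<eta>)" for \<eta>
    unfolding tilt_odds_def using nonzero by (intro continuous_intros continuous_on_tilt_prob) auto
  then have "continuous_on {0..1/8} (\<lambda>c. orbit_series (shift e) (tilt_odds e c) \<omega>)"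
  proof (rule continuous_on_orbit_series)
    show "0 \<le> tilt_odds e c \<eta>" "tilt_odds e c \<eta> \<le> 1/3" if "c \<in> {0..1/8}" for c \<eta>
      using that tilt_odds_bounds[of c e \<eta>] by auto
  qed
  then show ?thesis
    unfolding tilt_weight_def using nonzero by (intro continuous_intros continuous_on_tilt_prob) auto
qed

context stationary_env
begin

definition tilt_mass :: "int \<Rightarrow> real \<Rightarrow> real" where
  "tilt_mass e c = (\<integral>\<omega>. tilt_weight e c \<omega> \<partial>P)"

lemma integrable_tilt_weight:
  assumes "0 \<le> c" "c \<le> 1/8"
  shows "integrable P (tilt_weight e c)"
proof (rule integrable_bounded[where B = 2])
  show "\<bar>tilt_weight e c \<omega>\<bar> \<le> 2" for \<omega>
    using tilt_weight_bounds[OF assms, of e \<omega>] by auto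
qed simp

lemma tilt_mass_bounds:
  assumes "0 \<le> c" "c \<le> 1/8"
  shows "1 \<le> tilt_mass e c" "tilt_mass e c \<le> 2"
proof -
  have "(\<integral>\<omega>. 1 \<partial>P) \<le> tilt_mass e c"
    unfolding tilt_mass_def using tilt_weight_bounds[OF assms, of e]
    by (intro integral_mono integrable_tilt_weight[OF assms]) auto
  then show "1 \<le> tilt_mass e c" by simp
  have "tilt_mass e c \<le> (\<integral>\<omega>. 2 \<partial>P)"
    unfolding tilt_mass_def using tilt_weight_bounds[OF assms, of e]
    by (intro integral_mono integrable_tilt_weight[OF assms]) auto
  then show "tilt_mass e c \<le> 2" by simp
qed

lemma tilt_mass_0: "tilt_mass e 0 = 1"
  by (simp add: tilt_mass_def tilt_weight_0)

lemma continuous_on_tilt_mass: "continuous_on {0..1/8} (tilt_mass e)"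
proof (rule continuous_on_sequentiallyI)
  fix u a assume u: "\<forall>n. u n \<in> {0..1/8::real}" and a: "a \<in> {0..1/8}" and "u \<longlonglongrightarrow> a"
  then have "(\<lambda>n. tilt_weight e (u n) \<omega>) \<longlonglongrightarrow> tilt_weight e a \<omega>" for \<omega>
    using continuous_on_tilt_weight[of e \<omega>] unfolding continuous_on_sequentially comp_def by blast
  then show "(\<lambda>n. tilt_mass e (u n)) \<longlonglongrightarrow> tilt_mass e a"
    unfolding tilt_mass_def
  proof (intro integral_dominated_convergence[where w = "\<lambda>_. 2"] AE_I2)
    show "norm (tilt_weight e (u n) \<omega>) \<le> 2" for n \<omega>
      using tilt_weight_bounds[of "u n" e \<omega>] u by auto
  qed (simp_all add: measurable_P)
qed

lemma tilt_chain:
  assumes "e \<in> U" "0 \<le> c" "c \<le> 1/8"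
  shows "kernel_chain P (\<lambda>\<omega>. tilt_weight e c \<omega> / tilt_mass e c) (tilt_kernel e c)"
proof unfold_locales
  show "(\<lambda>\<omega>. tilt_weight e c \<omega> / tilt_mass e c) \<in> borel_measurable Omega" by measurable
  show "integrable P (\<lambda>\<omega>. tilt_weight e c \<omega> / tilt_mass e c)"
    using integrable_tilt_weight[OF assms(2,3)] by simp
  show "(\<integral>\<omega>. tilt_weight e c \<omega> / tilt_mass e c \<partial>P) = 1"
    using tilt_mass_bounds[OF assms(2,3), of e] by (simp add: tilt_mass_def)
  show "0 \<le> tilt_weight e c \<omega> / tilt_mass e c" for \<omega>
    using tilt_weight_bounds[OF assms(2,3), of e \<omega>] tilt_mass_bounds[OF assms(2,3), of e] by simp
  show "0 \<le> tilt_kernel e c \<omega> z" for \<omega> z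
    using tilt_prob_bounds[OF assms(2,3), of e \<omega>] by (simp add: tilt_kernel_def)
  have "-e \<noteq> e" using U_cases[OF assms(1)] by auto
  then show "(\<Sum>z\<in>U. tilt_kernel e c \<omega> z) = 1" for \<omega>
    by (simp add: sum_U[OF assms(1)] tilt_kernel_def)
qed simp_all

lemma tilt_chain_invariant:
  assumes "e \<in> U" "0 \<le> c" "c \<le> 1/8"
  shows "(\<Sum>z\<in>U. tilt_weight e c (shift (-z) \<omega>) / tilt_mass e c * tilt_kernel e c (shift (-z) \<omega>) z)
    = tilt_weight e c \<omega> / tilt_mass e c"
proof -
  have "-e \<noteq> e" using U_cases[OF assms(1)] by auto
  then have "(\<Sum>z\<in>U. tilt_weight e c (shift (-z) \<omega>) / tilt_mass e c * tilt_kernel e c (shift (-z) \<omega>) z)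
      = tilt_weight e c (shift (-e) \<omega>) / tilt_mass e c * tilt_prob e c (shift (-e) \<omega>)
        + tilt_weight e c (shift e \<omega>) / tilt_mass e c * (1 - tilt_prob e c (shift e \<omega>))"
    by (simp add: sum_U[OF assms(1)] tilt_kernel_def)
  also have "\<dots> = tilt_weight e c \<omega> / tilt_mass e c"
    using tilt_weight_invariant[OF assms(2,3), of e \<omega>] by (simp add: add_divide_distrib[symmetric])
  finally show ?thesis .
qed

lemma mean_step_tilt_chain:
  assumes "e \<in> U" "0 \<le> c" "c \<le> 1/8"
  shows "(\<integral>p. real_of_int (snd p) \<partial>kernel_chain.chain_measure P (\<lambda>\<omega>. tilt_weight e c \<omega> / tilt_mass e c) (tilt_kernel e c))
    = e / tilt_mass e c"
proof -
  interpret kernel_chain P "\<lambda>\<omega>. tilt_weight e c \<omega> / tilt_mass e c" "tilt_kernel e c"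
    by (rule tilt_chain[OF assms])
  let ?h = "tilt_weight e c" and ?q = "tilt_prob e c"
  have bounded: "\<bar>?h \<omega> * ?q \<omega>\<bar> \<le> 2" "\<bar>?h \<omega> * (1 - ?q \<omega>)\<bar> \<le> 2" for \<omega>
  proof -
    have "1 \<le> ?h \<omega>" "?h \<omega> \<le> 2" "3/4 \<le> ?q \<omega>" "?q \<omega> \<le> 1"
      using tilt_weight_bounds[OF assms(2,3), of e \<omega>] tilt_prob_bounds[OF assms(2,3), of e \<omega>] by auto
    then show "\<bar>?h \<omega> * ?q \<omega>\<bar> \<le> 2" "\<bar>?h \<omega> * (1 - ?q \<omega>)\<bar> \<le> 2"
      by (auto simp: abs_mult intro: order_trans[OF mult_left_le])
  qed
  have integrable: "integrable P (\<lambda>\<omega>. ?h \<omega> * ?q \<omega>)" "integrable P (\<lambda>\<omega>. ?h \<omega> * (1 - ?q \<omega>))"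
    using bounded by (intro integrable_bounded[where B = 2]; simp)+
  have "(\<integral>\<omega>. ?h \<omega> * ?q \<omega> \<partial>P) - (\<integral>\<omega>. ?h \<omega> * (1 - ?q \<omega>) \<partial>P)
      = (\<integral>\<omega>. ?h \<omega> * ?q \<omega> - ?h (shift e \<omega>) * (1 - ?q (shift e \<omega>)) \<partial>P)"
    using integral_shift[of "\<lambda>\<omega>. ?h \<omega> * (1 - ?q \<omega>)" e] integrable integrable_shift[OF integrable(2)]
    by simp
  also have "\<dots> = 1"
    using tilt_weight_flux[OF assms(2,3), of e] by simp
  finally have flux: "(\<integral>\<omega>. ?h \<omega> * ?q \<omega> \<partial>P) - (\<integral>\<omega>. ?h \<omega> * (1 - ?q \<omega>) \<partial>P) = 1" .
  have pointwise: "?h \<omega> / tilt_mass e c * (tilt_kernel e c \<omega> 1 - tilt_kernel e c \<omega> (-1))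
      = e / tilt_mass e c * (?h \<omega> * ?q \<omega> - ?h \<omega> * (1 - ?q \<omega>))" for \<omega>
    using U_cases[OF assms(1)] tilt_mass_bounds[OF assms(2,3), of e]
    by (auto simp: tilt_kernel_def field_simps)
  have "(\<integral>\<omega>. ?h \<omega> / tilt_mass e c * (tilt_kernel e c \<omega> 1 - tilt_kernel e c \<omega> (-1)) \<partial>P)
      = (\<integral>\<omega>. e / tilt_mass e c * (?h \<omega> * ?q \<omega> - ?h \<omega> * (1 - ?q \<omega>)) \<partial>P)"
    unfolding pointwise ..
  also have "\<dots> = e / tilt_mass e c * ((\<integral>\<omega>. ?h \<omega> * ?q \<omega> \<partial>P) - (\<integral>\<omega>. ?h \<omega> * (1 - ?q \<omega>) \<partial>P))"
    using integrable by (simp add: Bochner_Integration.integral_diff)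
  also have "\<dots> = e / tilt_mass e c"
    using flux by simp
  finally show ?thesis
    using mean_step_chain_measure by simp
qed

definition tilt_drift :: "int \<Rightarrow> real \<Rightarrow> real" where
  "tilt_drift e c = (\<integral>\<omega>. ln (tilt_prob e c \<omega>) - ln (pi0 \<omega> e) \<partial>P)"

definition tilt_potential :: "int \<Rightarrow> real \<Rightarrow> env \<Rightarrow> real" where
  "tilt_potential e c \<omega> = ln (tilt_prob e c \<omega>) - ln (pi0 \<omega> e) - tilt_drift e c"

lemma measurable_tilt_potential [measurable]: "tilt_potential e c \<in> borel_measurable Omega"
  unfolding tilt_potential_def by measurable

lemma tilt_exponent_forward:
  assumes "e \<in> U"
  shows "real_of_int e * (tilt_drift e c - ln c / 2) * real_of_int e + gradient_field e (tilt_potential e c) \<omega> e + ln c / 2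
    = ln (tilt_prob e c \<omega>) - ln (pi0 \<omega> e)"
  using U_cases[OF assms] by (auto simp: gradient_field_def tilt_potential_def)

lemma tilt_exponent_backward:
  assumes "e \<in> U"
  shows "real_of_int e * (tilt_drift e c - ln c / 2) * real_of_int (-e) + gradient_field e (tilt_potential e c) \<omega> (-e) + ln c / 2
    = ln c + ln (pi0 (shift (-e) \<omega>) e) - ln (tilt_prob e c (shift (-e) \<omega>))"
  using U_cases[OF assms] by (auto simp: gradient_field_def tilt_potential_def)

end

section \<open>Attained speeds\<close>

definition exponential_tilt :: "env measure \<Rightarrow> (env \<times> int) measure \<Rightarrow> bool" where
  "exponential_tilt P \<mu> \<longleftrightarrow> (\<exists>\<theta> F r. F \<in> classK P \<and>
     (\<forall>z\<in>U. \<forall>A\<in>sets Omega. emeasure \<mu> (A \<times> {z}) =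
        (\<integral>\<^sup>+\<omega>. ennreal (pi0 \<omega> z * exp (\<theta> * real_of_int z + F \<omega> z + r)) * indicator A \<omega> \<partial>marg1 \<mu>)))"


lemma abs_ln_tilt_prob_le:
  assumes "0 \<le> c" "c \<le> 1/8"
  shows "\<bar>ln (tilt_prob e c \<omega>)\<bar> \<le> 1"
proof -
  have q: "3/4 \<le> tilt_prob e c \<omega>" "tilt_prob e c \<omega> \<le> 1"
    using tilt_prob_bounds[OF assms] by auto
  have "- ln (tilt_prob e c \<omega>) = ln (1 / tilt_prob e c \<omega>)"
    using q by (simp add: ln_div)
  also have "\<dots> \<le> 1 / tilt_prob e c \<omega> - 1"
    using q by (intro ln_le_minus_one) simp
  also have "\<dots> \<le> 1" using q by (simp add: field_simps)
  finally show ?thesis using q by simp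
qed

locale log_moment_env = stationary_env +
  fixes \<alpha> :: real
  assumes pi0_pos: "AE \<omega> in P. pi0 \<omega> 1 > 0 \<and> pi0 \<omega> (-1) > 0"
    and alpha_pos: "0 < \<alpha>"
    and log_pi0_moment: "\<forall>z\<in>U. integrable P (\<lambda>\<omega>. \<bar>ln (pi0 \<omega> z)\<bar> powr (1 + \<alpha>))"
begin

lemma AE_bond:
  assumes "e \<in> U"
  shows "AE \<omega> in P. (\<forall>z\<in>U. 0 < pi0 \<omega> z) \<and> 0 < pi0 (shift (-e) \<omega>) e \<and>
    0 < bond e \<omega> \<and> bond e \<omega> = pi0 (shift (-e) \<omega>) e * pi0 \<omega> (-e)"
  using AE_env AE_shift[OF AE_env, of "-e"] pi0_pos AE_shift[OF pi0_pos, of "-e"]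
proof eventually_elim
  case (elim \<omega>)
  have e: "e = 1 \<or> e = -1" by (rule U_cases[OF assms])
  have pos: "0 < pi0 (shift (-e) \<omega>) e" "0 < pi0 \<omega> (-e)"
    using elim e by auto
  have "pi0 (shift (-e) \<omega>) e * pi0 \<omega> (-e) \<le> 1"
    using pi0_bounds[OF elim(1)] pi0_bounds[OF elim(2)] by (intro mult_le_one) auto
  then show ?case
    using elim pos by (auto simp: bond_def U_def)
qed

lemma AE_tilt_kernel_pos:
  assumes "e \<in> U" "0 < c" "c \<le> 1/8"
  shows "AE \<omega> in P. \<forall>z\<in>U. 0 < tilt_kernel e c \<omega> z"
  using AE_bond[OF assms(1)]
proof eventually_elim
  case (elim \<omega>)
  have "0 < c * bond e \<omega> / tilt_prob e c (shift (-e) \<omega>)"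
    using elim assms(2) tilt_prob_bounds(1)[of c e "shift (-e) \<omega>"] assms(3) by simp
  then have "0 < 1 - tilt_prob e c \<omega>"
    using tilt_prob_fixpoint[of c e \<omega>] assms by simp
  then show ?case
    using tilt_prob_bounds(1)[of c e \<omega>] assms U_eq[OF assms(1)] by (auto simp: tilt_kernel_def)
qed

lemma tilt_mass_gt_1:
  assumes "e \<in> U" "0 < c" "c \<le> 1/8"
  shows "1 < tilt_mass e c"
proof -
  have integrable_bond: "integrable P (bond e)"
    using bond_bounds by (intro integrable_bounded[where B = 1]) auto
  have "(\<integral>\<omega>. bond e \<omega> \<partial>P) \<noteq> 0"
  proof
    assume "(\<integral>\<omega>. bond e \<omega> \<partial>P) = 0"
    then have "AE \<omega> in P. bond e \<omega> = 0"
      using integral_nonneg_eq_0_iff_AE[OF integrable_bond] bond_bounds by simp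
    with AE_bond[OF assms(1)] have "AE \<omega> in P. False"
      by eventually_elim simp
    then show False by simp
  qed
  then have "0 < (\<integral>\<omega>. bond e \<omega> \<partial>P)"
    using integral_nonneg_AE[of "bond e" P] bond_bounds by (simp add: order_less_le)
  then have "1 < (\<integral>\<omega>. 1 + c * bond e \<omega> \<partial>P)"
    using integrable_bond assms(2) by simp
  also have "\<dots> \<le> tilt_mass e c"
    unfolding tilt_mass_def using integrable_bond assms tilt_weight_ge[of c e]
    by (intro integral_mono integrable_tilt_weight) auto
  finally show ?thesis .
qed

lemma tilt_mass_range:
  assumes "e \<in> U"
  shows "\<exists>\<beta>. 0 \<le> \<beta> \<and> \<beta> < 1 \<and>
    (\<forall>t. \<beta> < t \<and> t < 1 \<longrightarrow> (\<exists>c. 0 < c \<and> c \<le> 1/8 \<and> 1 / tilt_mass e c = t))"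
proof -
  define \<beta> where "\<beta> = 1 / tilt_mass e (1/8)"
  have "1 < tilt_mass e (1/8)"
    using tilt_mass_gt_1[OF assms] by simp
  then have \<beta>: "0 \<le> \<beta>" "\<beta> < 1"
    by (simp_all add: \<beta>_def)
  have "\<exists>c. 0 < c \<and> c \<le> 1/8 \<and> 1 / tilt_mass e c = t" if t: "\<beta> < t" "t < 1" for t
  proof -
    have "continuous_on {0..1/8} (\<lambda>c. - (1 / tilt_mass e c))"
      using tilt_mass_bounds(1)[of _ e]
      by (intro continuous_intros continuous_on_tilt_mass) fastforce
    then obtain c where c: "0 \<le> c" "c \<le> 1/8" "- (1 / tilt_mass e c) = - t"
      using IVT'[of "\<lambda>c. - (1 / tilt_mass e c)" 0 "- t" "1/8"] t tilt_mass_0 by (auto simp: \<beta>_def)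
    moreover have "c \<noteq> 0" using c t tilt_mass_0 by auto
    ultimately show ?thesis
      by (intro exI[of _ c]) auto
  qed
  then show ?thesis
    using \<beta> by blast
qed

lemma integrable_ln_pi0:
  assumes "z \<in> U"
  shows "integrable P (\<lambda>\<omega>. ln (pi0 \<omega> z))"
proof (rule integrable_of_integrable_abs_powr[where p = "1 + \<alpha>"])
  show "(\<lambda>\<omega>. ln (pi0 \<omega> z)) \<in> borel_measurable Omega" by measurable
qed (use assms log_pi0_moment alpha_pos in auto)

context
  fixes e :: int and c :: real
  assumes e: "e \<in> U" and c_pos: "0 < c" and c_le: "c \<le> 1/8"
begin

lemma integrable_ln_tilt_prob: "integrable P (\<lambda>\<omega>. ln (tilt_prob e c \<omega>))"
  using abs_ln_tilt_prob_le c_pos c_le by (intro integrable_bounded[where B = 1]) auto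

lemma gradient_tilt_potential_in_classK: "gradient_field e (tilt_potential e c) \<in> classK P"
proof (rule gradient_field_in_classK[OF e _ alpha_pos])
  show "integrable P (\<lambda>\<omega>. \<bar>tilt_potential e c \<omega>\<bar> powr (1 + \<alpha>))"
  proof -
    have "\<bar>ln (tilt_prob e c \<omega>) - tilt_drift e c\<bar> \<le> 1 + \<bar>tilt_drift e c\<bar>" for \<omega>
      using abs_ln_tilt_prob_le[of c e \<omega>] c_pos c_le by (smt (verit))
    then have "integrable P (\<lambda>\<omega>. \<bar>(ln (tilt_prob e c \<omega>) - tilt_drift e c) + - ln (pi0 \<omega> e)\<bar> powr (1 + \<alpha>))"
      using log_pi0_moment e alpha_pos
      by (intro integrable_abs_powr_add_bounded[where K = "1 + \<bar>tilt_drift e c\<bar>"]) auto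
    then show ?thesis by (simp add: tilt_potential_def algebra_simps)
  qed
  show "(\<integral>\<omega>. tilt_potential e c \<omega> \<partial>P) = 0"
    using integrable_ln_tilt_prob integrable_ln_pi0[OF e]
    by (simp add: tilt_potential_def tilt_drift_def)
qed simp

text \<open>By the fixed point equation the tilted probabilities across a bond multiply to \<open>c\<close> times
  the original ones, which is why the exponent is a gradient plus \<open>\<theta> z + ln c / 2\<close>.\<close>

lemma tilt_kernel_exponential:
  "AE \<omega> in P. \<forall>z\<in>U. pi0 \<omega> z * exp (e * (tilt_drift e c - ln c / 2) * z
      + gradient_field e (tilt_potential e c) \<omega> z + ln c / 2) = tilt_kernel e c \<omega> z"
  using AE_bond[OF e]
proof eventually_elim
  case (elim \<omega>)
  have q: "0 < tilt_prob e c \<omega>" "0 < tilt_prob e c (shift (-e) \<omega>)"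
    using tilt_prob_bounds(1)[of c e \<omega>] tilt_prob_bounds(1)[of c e "shift (-e) \<omega>"] c_pos c_le
    by auto
  have pi: "0 < pi0 \<omega> e" "0 < pi0 \<omega> (-e)" "0 < pi0 (shift (-e) \<omega>) e"
    using elim U_eq[OF e] by auto
  show ?case
  proof
    fix z assume z: "z \<in> U"
    then consider "z = e" | "z = -e" "-e \<noteq> e" using U_cases[OF e] U_cases[OF z] by fastforce
    then show "pi0 \<omega> z * exp (e * (tilt_drift e c - ln c / 2) * z
        + gradient_field e (tilt_potential e c) \<omega> z + ln c / 2) = tilt_kernel e c \<omega> z"
    proof cases
      case 1
      then have "pi0 \<omega> z * exp (e * (tilt_drift e c - ln c / 2) * z
          + gradient_field e (tilt_potential e c) \<omega> z + ln c / 2)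
          = pi0 \<omega> e * exp (ln (tilt_prob e c \<omega>) - ln (pi0 \<omega> e))"
        by (simp only: tilt_exponent_forward[OF e])
      also have "\<dots> = tilt_prob e c \<omega>"
        using q pi by (simp add: exp_diff)
      finally show ?thesis
        using 1 by (simp add: tilt_kernel_def)
    next
      case 2
      then have "pi0 \<omega> z * exp (e * (tilt_drift e c - ln c / 2) * z
          + gradient_field e (tilt_potential e c) \<omega> z + ln c / 2)
          = pi0 \<omega> (-e) * exp (ln c + ln (pi0 (shift (-e) \<omega>) e) - ln (tilt_prob e c (shift (-e) \<omega>)))"
        by (simp only: tilt_exponent_backward[OF e])
      also have "\<dots> = c * (pi0 (shift (-e) \<omega>) e * pi0 \<omega> (-e)) / tilt_prob e c (shift (-e) \<omega>)"
        using q pi c_pos by (simp add: exp_add exp_diff)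
      also have "\<dots> = 1 - tilt_prob e c \<omega>"
        using tilt_prob_fixpoint[of c e \<omega>] c_pos c_le elim by simp
      finally show ?thesis
        using 2 by (simp add: tilt_kernel_def)
    qed
  qed
qed

lemma tilted_chain:
  "\<exists>\<mu>. \<mu> \<in> A_xi (e / tilt_mass e c) \<inter> M1s_ac P \<and> exponential_tilt P \<mu>"
proof -
  interpret kernel_chain P "\<lambda>\<omega>. tilt_weight e c \<omega> / tilt_mass e c" "tilt_kernel e c"
    using tilt_chain[OF e] c_pos c_le by simp
  have "chain_measure \<in> A_xi (e / tilt_mass e c)"
    using chain_measure_in_M1 mean_step_tilt_chain[OF e] c_pos c_le by (simp add: A_xi_def)
  moreover have "chain_measure \<in> M1s_ac P"
    using tilt_chain_invariant[OF e] AE_tilt_kernel_pos[OF e c_pos c_le] c_pos c_le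
    by (intro chain_measure_in_M1s_ac) auto
  moreover have "exponential_tilt P chain_measure"
    unfolding exponential_tilt_def
  proof (rule exI[of _ "e * (tilt_drift e c - ln c / 2)"], rule exI[of _ "gradient_field e (tilt_potential e c)"],
      rule exI[of _ "ln c / 2"], intro conjI ballI)
    show "gradient_field e (tilt_potential e c) \<in> classK P"
      by (rule gradient_tilt_potential_in_classK)
    fix z A assume z: "z \<in> U" and A: "A \<in> sets Omega"
    show "emeasure chain_measure (A \<times> {z}) = (\<integral>\<^sup>+\<omega>. ennreal (pi0 \<omega> z * exp (e * (tilt_drift e c - ln c / 2) * z
        + gradient_field e (tilt_potential e c) \<omega> z + ln c / 2)) * indicator A \<omega> \<partial>marg1 chain_measure)"
    proof (rule emeasure_chain_measure_slice_marg1[OF A z])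
      show "(\<lambda>\<omega>. pi0 \<omega> z * exp (e * (tilt_drift e c - ln c / 2) * z
          + gradient_field e (tilt_potential e c) \<omega> z + ln c / 2)) \<in> borel_measurable Omega"
        unfolding gradient_field_def by measurable
      show "AE \<omega> in P. pi0 \<omega> z * exp (e * (tilt_drift e c - ln c / 2) * z
          + gradient_field e (tilt_potential e c) \<omega> z + ln c / 2) = tilt_kernel e c \<omega> z"
        using tilt_kernel_exponential by eventually_elim (use z in blast)
    qed
  qed
  ultimately show ?thesis by blast
qed

end

lemma speed_range:
  assumes "e \<in> U"
  shows "\<exists>\<beta>. 0 \<le> \<beta> \<and> \<beta> < 1 \<and>
    (\<forall>t. \<beta> < t \<and> t < 1 \<longrightarrow> (\<exists>\<mu>. \<mu> \<in> A_xi (real_of_int e * t) \<inter> M1s_ac P \<and> exponential_tilt P \<mu>))"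
  using tilt_mass_range[OF assms] tilted_chain[OF assms] by (metis times_divide_eq_right mult_1_right)

end

theorem theorem1p7:
  fixes P :: "env measure"
  assumes "stationary_ergodic P"
    and "AE \<omega> in P. pi0 \<omega> 1 > 0 \<and> pi0 \<omega> (-1) > 0"
    and "\<exists>\<alpha> > 0. \<forall>z \<in> U. integrable P (\<lambda>\<omega>. \<bar>ln (pi0 \<omega> z)\<bar> powr (1 + \<alpha>))"
  shows "\<exists>\<xi>c \<xi>c'. -1 < \<xi>c' \<and> \<xi>c' \<le> 0 \<and> 0 \<le> \<xi>c \<and> \<xi>c < 1 \<and>
    (\<forall>\<xi>. \<xi> \<in> {-1<..<\<xi>c'} \<union> {\<xi>c<..<1} \<longrightarrow>
      (\<exists>\<mu>. \<mu> \<in> A_xi \<xi> \<inter> M1s_ac P \<and>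
        (\<exists>\<theta> F r. F \<in> classK P \<and>
          (\<forall>z \<in> U. \<forall>A \<in> sets Omega. emeasure \<mu> (A \<times> {z}) =
             (\<integral>\<^sup>+ \<omega>. ennreal (pi0 \<omega> z * exp (\<theta> * real_of_int z + F \<omega> z + r)) * indicator A \<omega>
                \<partial>(marg1 \<mu>))))))"
proof -
  obtain \<alpha> where \<alpha>: "\<alpha> > 0" "\<forall>z \<in> U. integrable P (\<lambda>\<omega>. \<bar>ln (pi0 \<omega> z)\<bar> powr (1 + \<alpha>))"
    using assms(3) by blast
  interpret log_moment_env P \<alpha>
    using assms(1,2) \<alpha> by unfold_locales
  obtain \<beta> where \<beta>: "0 \<le> \<beta>" "\<beta> < 1"
    and right: "\<And>t. \<beta> < t \<Longrightarrow> t < 1 \<Longrightarrow> \<exists>\<mu>. \<mu> \<in> A_xi t \<inter> M1s_ac P \<and> exponential_tilt P \<mu>"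
    using speed_range[of 1] by (auto simp: U_def)
  obtain \<beta>' where \<beta>': "0 \<le> \<beta>'" "\<beta>' < 1"
    and left: "\<And>t. \<beta>' < t \<Longrightarrow> t < 1 \<Longrightarrow> \<exists>\<mu>. \<mu> \<in> A_xi (-t) \<inter> M1s_ac P \<and> exponential_tilt P \<mu>"
    using speed_range[of "-1"] by (auto simp: U_def)
  have "\<exists>\<mu>. \<mu> \<in> A_xi \<xi> \<inter> M1s_ac P \<and> exponential_tilt P \<mu>" if "\<xi> \<in> {-1<..<-\<beta>'} \<union> {\<beta><..<1}" for \<xi>
    using that left[of "-\<xi>"] right[of \<xi>] by auto
  then show ?thesis
    using \<beta> \<beta>' unfolding exponential_tilt_def by (intro exI[of _ \<beta>] exI[of _ "-\<beta>'"]) auto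
qed

end
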